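(* Let $\epsilon\ge0$. Let $Z$ be a feasible point of the SDP relaxation described in the context, with first-row data $(z_+,z_-,\rho)$, and let $(x_+^{Q},x_-^{Q},r^{Q})$ be its reconstruction, i.e. $x_\pm^{Q}=z_\pm$ and $r^{Q}=\max\{r\in[0,1]: (A_\delta z_+ + A_\delta z_- + b_\delta)\,r + A_c z_+ - A_c z_- - b_c\le 0\}$. If $(x_+^{Q},x_-^{Q})$ is weakly $\epsilon$-efficient for the LP of robustness level $r^{Q}$, then $(x_+^{Q},x_-^{Q},r^{Q})$ is weakly $\epsilon$-efficient for the QCQP.
   Context: Let $k,m,n\in\mathbb{N}$. Let $A_c,A_\delta\in\mathbb{R}^{m\times n}$ with $A_\delta\ge 0$ entrywise, $b_c,b_\delta\in\mathbb{R}^m$ with $b_\delta\ge0$, $G\in\mathbb{R}^{k\times n}$, and $\ell,u\in\mathbb{R}^n$ with $\ell\le u$. All vector inequalities are componentwise. QCQP: variables $x_+,x_-\in\mathbb{R}^n_{\ge0}$, $r\in[0,1]$, subject to $A_cx_+-A_cx_-+rA_\delta x_++rA_\delta x_-+rb_\delta-b_c\le0$ and $\ell\le x_+-x_-\le u$; vector objective $F(x_+,x_-,r)=(G(x_+-x_-),-r)\in\mathbb{R}^{k+1}$, minimized in the Pareto sense. LP of robustness level $r$ (for fixed $r\in[0,1]$): variables $x_+,x_-\in\mathbb{R}^n_{\ge0}$, subject to $(A_c+rA_\delta)x_+-(A_c-rA_\delta)x_-\le b_c-rb_\delta$ and $\ell\le x_+-x_-\le u$; vector objective $G(x_+-x_-)\in\mathbb{R}^k$,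 minimized in the Pareto sense. SDP relaxation: variable a symmetric positive semidefinite matrix $Z$ of size $(2n+2)\times(2n+2)$ written in block form with row/column blocks of sizes $1,n,n,1$: $Z=\begin{pmatrix} Z_{00} & z_+^T & z_-^T & \rho\\ z_+ & * & * & w_+\\ z_- & * & * & w_-\\ \rho & w_+^T & w_-^T & \sigma\end{pmatrix}$, with $z_\pm,w_\pm\in\mathbb{R}^n$, $\rho,\sigma\in\mathbb{R}$. Constraints: $Z_{00}=1$; $A_cz_+-A_cz_-+A_\delta(w_++w_-)+\rho\, b_\delta-b_c\le0$; $\ell\le z_+-z_-\le u$; $z_+,z_-\ge0$, $\rho\ge0$, $w_+,w_-\ge0$; $\sigma\le1$. Vector objective $(G(z_+-z_-),-\rho)\in\mathbb{R}^{k+1}$, minimized in the Pareto sense. Efficiency (for minimizing a vector function $f$ over a feasible set $\mathcal{X}$): $x^*\in\mathcal{X}$ is efficient if there is no $x\in\mathcal{X}$ with $f(x)\le f(x^* )$ and $f(x)\ne f(x^* )$; weakly efficient if there is no $x\in\mathcal{X}$ with $f(x)<f(x^* )$ (all components strict); strictly efficient if there is no $x\in\mathcal{X}$, $x\neq x^*$, with $f(x)\le f(x^* )$. For $\epsilon\ge0$, $x^*$ is weakly $\epsilon$-efficient if there is no $x\in\mathcal{X}$ with $f(x)<f(x^* )-\epsilon\mathbb{1}$, where $\mathbb{1}$ is the all-ones vector. *)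

theory Defs
  imports "HOL-Analysis.Analysis"
begin

definition weakly_eps_efficient :: "('x \<Rightarrow> real^'i) \<Rightarrow> 'x set \<Rightarrow> real \<Rightarrow> 'x \<Rightarrow> bool" where
  "weakly_eps_efficient f X eps xs \<longleftrightarrow>
     xs \<in> X \<and> \<not> (\<exists>x\<in>X. \<forall>i. f x $ i < f xs $ i - eps)"

definition qcqp_feasible ::
  "real^'n^'m \<Rightarrow> real^'n^'m \<Rightarrow> real^'m \<Rightarrow> real^'m \<Rightarrow> real^'n \<Rightarrow> real^'n
   \<Rightarrow> ((real^'n) \<times> (real^'n) \<times> real) set" where
  "qcqp_feasible Ac Ad bc bd l u =
     {(xp, xm, r). (\<forall>i. 0 \<le> xp $ i) \<and> (\<forall>i. 0 \<le> xm $ i) \<and> 0 \<le> r \<and> r \<le> 1 \<and>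
        (\<forall>j. (Ac *v xp - Ac *v xm + r *\<^sub>R (Ad *v xp) + r *\<^sub>R (Ad *v xm) + r *\<^sub>R bd - bc) $ j \<le> 0) \<and>
        (\<forall>i. l $ i \<le> (xp - xm) $ i \<and> (xp - xm) $ i \<le> u $ i)}"

definition qcqp_obj :: "real^'n^'k \<Rightarrow> (real^'n) \<times> (real^'n) \<times> real \<Rightarrow> real^('k option)" where
  "qcqp_obj G p = (case p of (xp, xm, r) \<Rightarrow>
     (\<chi> j. case j of None \<Rightarrow> - r | Some i \<Rightarrow> (G *v (xp - xm)) $ i))"

definition lp_feasible ::
  "real^'n^'m \<Rightarrow> real^'n^'m \<Rightarrow> real^'m \<Rightarrow> real^'m \<Rightarrow> real^'n \<Rightarrow> real^'n \<Rightarrow> real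
   \<Rightarrow> ((real^'n) \<times> (real^'n)) set" where
  "lp_feasible Ac Ad bc bd l u r =
     {(xp, xm). (\<forall>i. 0 \<le> xp $ i) \<and> (\<forall>i. 0 \<le> xm $ i) \<and>
        (\<forall>j. ((Ac + r *\<^sub>R Ad) *v xp - (Ac - r *\<^sub>R Ad) *v xm) $ j \<le> (bc - r *\<^sub>R bd) $ j) \<and>
        (\<forall>i. l $ i \<le> (xp - xm) $ i \<and> (xp - xm) $ i \<le> u $ i)}"

definition lp_obj :: "real^'n^'k \<Rightarrow> (real^'n) \<times> (real^'n) \<Rightarrow> real^'k" where
  "lp_obj G p = (case p of (xp, xm) \<Rightarrow> G *v (xp - xm))"

text \<open>Index type for the (2n+2)x(2n+2) SDP matrix, blocks of sizes 1, n, n, 1.\<close>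
datatype 'n blk = B0 | BP 'n | BM 'n | BS

lemma UNIV_blk: "(UNIV :: 'n blk set) = {B0, BS} \<union> range BP \<union> range BM"
  by (auto intro: blk.exhaust)

instance blk :: (finite) finite
  by standard (simp add: UNIV_blk)

definition psd :: "real^'a^'a \<Rightarrow> bool" where
  "psd Z \<longleftrightarrow> transpose Z = Z \<and> (\<forall>v. 0 \<le> v \<bullet> (Z *v v))"

definition sdp_zp :: "real^('n::finite blk)^('n blk) \<Rightarrow> real^'n" where
  "sdp_zp Z = (\<chi> i. Z $ B0 $ BP i)"
definition sdp_zm :: "real^('n::finite blk)^('n blk) \<Rightarrow> real^'n" where
  "sdp_zm Z = (\<chi> i. Z $ B0 $ BM i)"
definition sdp_wp :: "real^('n::finite blk)^('n blk) \<Rightarrow> real^'n" where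
  "sdp_wp Z = (\<chi> i. Z $ BP i $ BS)"
definition sdp_wm :: "real^('n::finite blk)^('n blk) \<Rightarrow> real^'n" where
  "sdp_wm Z = (\<chi> i. Z $ BM i $ BS)"
definition sdp_rho :: "real^('n::finite blk)^('n blk) \<Rightarrow> real" where
  "sdp_rho Z = Z $ B0 $ BS"
definition sdp_sigma :: "real^('n::finite blk)^('n blk) \<Rightarrow> real" where
  "sdp_sigma Z = Z $ BS $ BS"

definition sdp_feasible ::
  "real^'n^'m \<Rightarrow> real^'n^'m \<Rightarrow> real^'m \<Rightarrow> real^'m \<Rightarrow> real^'n \<Rightarrow> real^'n
   \<Rightarrow> real^('n::finite blk)^('n blk) \<Rightarrow> bool" where
  "sdp_feasible Ac Ad bc bd l u Z \<longleftrightarrow>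
     psd Z \<and> Z $ B0 $ B0 = 1 \<and>
     (\<forall>j. (Ac *v sdp_zp Z - Ac *v sdp_zm Z + Ad *v (sdp_wp Z + sdp_wm Z)
            + sdp_rho Z *\<^sub>R bd - bc) $ j \<le> 0) \<and>
     (\<forall>i. l $ i \<le> (sdp_zp Z - sdp_zm Z) $ i \<and> (sdp_zp Z - sdp_zm Z) $ i \<le> u $ i) \<and>
     (\<forall>i. 0 \<le> sdp_zp Z $ i) \<and> (\<forall>i. 0 \<le> sdp_zm Z $ i) \<and> 0 \<le> sdp_rho Z \<and>
     (\<forall>i. 0 \<le> sdp_wp Z $ i) \<and> (\<forall>i. 0 \<le> sdp_wm Z $ i) \<and> sdp_sigma Z \<le> 1"

definition reconstruct_r ::
  "real^'n^'m \<Rightarrow> real^'n^'m \<Rightarrow> real^'m \<Rightarrow> real^'m \<Rightarrow> real^'n \<Rightarrow> real^'n \<Rightarrow> real" where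
  "reconstruct_r Ac Ad bc bd zp zm =
     (GREATEST r. 0 \<le> r \<and> r \<le> 1 \<and>
        (\<forall>j. (r *\<^sub>R (Ad *v zp + Ad *v zm + bd) + Ac *v zp - Ac *v zm - bc) $ j \<le> 0))"

end

theory Submission
  imports Defs
begin

text \<open>The reconstructed level \<open>r\<^sup>Q\<close> is a genuine maximum: the admissible levels form a
  closed subset of \<open>[0,1]\<close> containing \<open>0\<close>, by the SDP constraint with the nonnegative terms
  \<open>A\<^sub>\<delta>(w\<^sub>+ + w\<^sub>-)\<close> and \<open>\<rho> b\<^sub>\<delta>\<close> dropped. At any QCQP point that improves on \<open>(z\<^sub>+, z\<^sub>-, r\<^sup>Q)\<close> by
  more than \<open>\<epsilon>\<close> in every objective, the level exceeds \<open>r\<^sup>Q\<close>; since the robust constraint is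
  monotone in the level (its \<open>r\<close>-coefficient \<open>A\<^sub>\<delta>x\<^sub>+ + A\<^sub>\<delta>x\<^sub>- + b\<^sub>\<delta>\<close> is nonnegative), the point is
  then feasible for the LP of level \<open>r\<^sup>Q\<close> and improves on \<open>(z\<^sub>+, z\<^sub>-)\<close> there.\<close>

lemma matrix_vector_mult_nonneg:
  fixes A :: "real^'n^'m" and x :: "real^'n"
  assumes "\<forall>j i. 0 \<le> A $ j $ i" and "\<forall>i. 0 \<le> x $ i"
  shows "0 \<le> (A *v x) $ j"
  using assms by (auto simp: matrix_vector_mult_def intro!: sum_nonneg)

lemma Greatest_closed_bdd_above:
  fixes P :: "real \<Rightarrow> bool"
  assumes "closed {r. P r}" and "bdd_above {r. P r}" and "P x"
  shows "P (GREATEST r. P r)"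
proof -
  have "Sup {r. P r} \<in> {r. P r}"
    using closed_contains_Sup[OF _ assms(2,1)] assms(3) by blast
  moreover have "r \<le> Sup {r. P r}" if "P r" for r
    using cSup_upper[OF _ assms(2)] that by blast
  ultimately have "(GREATEST r. P r) = Sup {r. P r}"
    by (intro Greatest_equality) auto
  with \<open>Sup {r. P r} \<in> {r. P r}\<close> show ?thesis by simp
qed

lemma reconstruct_r_admissible:
  fixes Ac Ad :: "real^'n^'m" and bc bd :: "real^'m" and zp zm :: "real^'n"
  assumes "\<forall>j. (Ac *v zp - Ac *v zm - bc) $ j \<le> 0"
  defines "rQ \<equiv> reconstruct_r Ac Ad bc bd zp zm"
  shows "0 \<le> rQ \<and> rQ \<le> 1 \<and>
    (\<forall>j. (rQ *\<^sub>R (Ad *v zp + Ad *v zm + bd) + Ac *v zp - Ac *v zm - bc) $ j \<le> 0)"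
  unfolding rQ_def reconstruct_r_def
proof (rule Greatest_closed_bdd_above[where x = 0])
  show "closed {r. 0 \<le> r \<and> r \<le> 1 \<and>
    (\<forall>j. (r *\<^sub>R (Ad *v zp + Ad *v zm + bd) + Ac *v zp - Ac *v zm - bc) $ j \<le> 0)}"
    by (intro closed_Collect_conj closed_Collect_all closed_Collect_le continuous_intros)
  show "bdd_above {r. 0 \<le> r \<and> r \<le> 1 \<and>
    (\<forall>j. (r *\<^sub>R (Ad *v zp + Ad *v zm + bd) + Ac *v zp - Ac *v zm - bc) $ j \<le> 0)}"
    by (auto intro: bdd_aboveI[where M = 1])
qed (use assms in simp)

lemma sdp_feasible_level_zero_admissible:
  assumes "\<forall>j i. 0 \<le> Ad $ j $ i" and "\<forall>j. 0 \<le> bd $ j"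
    and "sdp_feasible Ac Ad bc bd l u Z"
  shows "\<forall>j. (Ac *v sdp_zp Z - Ac *v sdp_zm Z - bc) $ j \<le> 0"
proof
  fix j
  have "0 \<le> (Ad *v (sdp_wp Z + sdp_wm Z)) $ j"
    using assms(3) by (intro matrix_vector_mult_nonneg[OF assms(1)]) (auto simp: sdp_feasible_def)
  moreover have "0 \<le> sdp_rho Z * bd $ j"
    using assms(2,3) by (simp add: sdp_feasible_def)
  moreover have "(Ac *v sdp_zp Z - Ac *v sdp_zm Z + Ad *v (sdp_wp Z + sdp_wm Z)
      + sdp_rho Z *\<^sub>R bd - bc) $ j \<le> 0"
    using assms(3) by (simp add: sdp_feasible_def)
  ultimately show "(Ac *v sdp_zp Z - Ac *v sdp_zm Z - bc) $ j \<le> 0" by simp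
qed

lemma lp_constraint_slack_eq:
  fixes Ac Ad :: "real^'n^'m"
  shows "(Ac + r *\<^sub>R Ad) *v xp - (Ac - r *\<^sub>R Ad) *v xm - (bc - r *\<^sub>R bd) =
    Ac *v xp - Ac *v xm - bc + r *\<^sub>R (Ad *v xp + Ad *v xm + bd)"
  by (simp add: matrix_vector_mult_add_rdistrib matrix_vector_mult_diff_rdistrib
      scaleR_matrix_vector_assoc[symmetric] scaleR_add_right)

lemma lp_feasible_iff:
  "(xp, xm) \<in> lp_feasible Ac Ad bc bd l u r \<longleftrightarrow>
     (\<forall>i. 0 \<le> xp $ i) \<and> (\<forall>i. 0 \<le> xm $ i) \<and>
     (\<forall>j. (Ac *v xp - Ac *v xm - bc + r *\<^sub>R (Ad *v xp + Ad *v xm + bd)) $ j \<le> 0) \<and>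
     (\<forall>i. l $ i \<le> (xp - xm) $ i \<and> (xp - xm) $ i \<le> u $ i)"
proof -
  have "((Ac + r *\<^sub>R Ad) *v xp - (Ac - r *\<^sub>R Ad) *v xm) $ j \<le> (bc - r *\<^sub>R bd) $ j \<longleftrightarrow>
      (Ac *v xp - Ac *v xm - bc + r *\<^sub>R (Ad *v xp + Ad *v xm + bd)) $ j \<le> 0" for j
    by (metis diff_le_0_iff_le vector_minus_component lp_constraint_slack_eq)
  then show ?thesis
    unfolding lp_feasible_def by blast
qed

lemma qcqp_feasible_iff_lp_feasible:
  "(xp, xm, r) \<in> qcqp_feasible Ac Ad bc bd l u \<longleftrightarrow>
     0 \<le> r \<and> r \<le> 1 \<and> (xp, xm) \<in> lp_feasible Ac Ad bc bd l u r"
proof -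
  have row: "Ac *v xp - Ac *v xm + r *\<^sub>R (Ad *v xp) + r *\<^sub>R (Ad *v xm) + r *\<^sub>R bd - bc =
      Ac *v xp - Ac *v xm - bc + r *\<^sub>R (Ad *v xp + Ad *v xm + bd)" for xp xm r
    by (simp add: scaleR_add_right)
  show ?thesis
    unfolding qcqp_feasible_def lp_feasible_iff row by auto
qed

lemma lp_feasible_antimono_level:
  fixes Ad :: "real^'n^'m"
  assumes "\<forall>j i. 0 \<le> Ad $ j $ i" and "\<forall>j. 0 \<le> bd $ j" and "r \<le> s"
    and "(xp, xm) \<in> lp_feasible Ac Ad bc bd l u s"
  shows "(xp, xm) \<in> lp_feasible Ac Ad bc bd l u r"
proof -
  have "0 \<le> (Ad *v xp + Ad *v xm + bd) $ j" for j
    using assms(4) matrix_vector_mult_nonneg[OF assms(1)] assms(2)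
    by (auto simp: lp_feasible_iff intro!: add_nonneg_nonneg)
  then have "(c + r *\<^sub>R (Ad *v xp + Ad *v xm + bd)) $ j \<le> (c + s *\<^sub>R (Ad *v xp + Ad *v xm + bd)) $ j"
    for c j
    using assms(3) by (simp add: mult_right_mono)
  then show ?thesis
    using assms(4) unfolding lp_feasible_iff by (meson order_trans)
qed
lemma qcqp_obj_None [simp]: "qcqp_obj G (xp, xm, r) $ None = - r"
  by (simp add: qcqp_obj_def)

lemma qcqp_obj_Some [simp]: "qcqp_obj G (xp, xm, r) $ Some i = lp_obj G (xp, xm) $ i"
  by (simp add: qcqp_obj_def lp_obj_def)

lemma weakly_eps_efficient_qcqp_if_lp:
  assumes "\<forall>j i. 0 \<le> Ad $ j $ i" and "\<forall>j. 0 \<le> bd $ j" and "0 \<le> eps"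
    and "0 \<le> r0" and "r0 \<le> 1"
    and lp_eff: "weakly_eps_efficient (lp_obj G) (lp_feasible Ac Ad bc bd l u r0) eps (zp, zm)"
  shows "weakly_eps_efficient (qcqp_obj G) (qcqp_feasible Ac Ad bc bd l u) eps (zp, zm, r0)"
  unfolding weakly_eps_efficient_def
proof (intro conjI notI)
  show "(zp, zm, r0) \<in> qcqp_feasible Ac Ad bc bd l u"
    using assms(4,5) lp_eff by (simp add: qcqp_feasible_iff_lp_feasible weakly_eps_efficient_def)
next
  assume "\<exists>x\<in>qcqp_feasible Ac Ad bc bd l u.
    \<forall>i. qcqp_obj G x $ i < qcqp_obj G (zp, zm, r0) $ i - eps"
  then obtain xp xm r where feas: "(xp, xm, r) \<in> qcqp_feasible Ac Ad bc bd l u"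
    and better: "\<forall>i. qcqp_obj G (xp, xm, r) $ i < qcqp_obj G (zp, zm, r0) $ i - eps"
    by auto
  have "r0 \<le> r"
    using better[rule_format, of None] assms(3) by simp
  then have "(xp, xm) \<in> lp_feasible Ac Ad bc bd l u r0"
    using feas assms(1,2) by (auto simp: qcqp_feasible_iff_lp_feasible intro: lp_feasible_antimono_level)
  moreover have "\<forall>i. lp_obj G (xp, xm) $ i < lp_obj G (zp, zm) $ i - eps"
    using better by (metis qcqp_obj_Some)
  ultimately show False
    using lp_eff by (auto simp: weakly_eps_efficient_def)
qed

theorem mainTheorem2:
  fixes Ac Ad :: "real^'n^'m" and bc bd :: "real^'m" and G :: "real^'n^'k"
    and l u :: "real^'n" and eps :: real and Z :: "real^('n blk)^('n blk)"
  assumes "\<forall>j i. 0 \<le> Ad $ j $ i"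
    and "\<forall>j. 0 \<le> bd $ j"
    and "\<forall>i. l $ i \<le> u $ i"
    and "0 \<le> eps"
    and "sdp_feasible Ac Ad bc bd l u Z"
    and "weakly_eps_efficient (lp_obj G)
           (lp_feasible Ac Ad bc bd l u (reconstruct_r Ac Ad bc bd (sdp_zp Z) (sdp_zm Z)))
           eps (sdp_zp Z, sdp_zm Z)"
  shows "weakly_eps_efficient (qcqp_obj G) (qcqp_feasible Ac Ad bc bd l u) eps
           (sdp_zp Z, sdp_zm Z, reconstruct_r Ac Ad bc bd (sdp_zp Z) (sdp_zm Z))"
proof -
  have "0 \<le> reconstruct_r Ac Ad bc bd (sdp_zp Z) (sdp_zm Z)
      \<and> reconstruct_r Ac Ad bc bd (sdp_zp Z) (sdp_zm Z) \<le> 1"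
    using reconstruct_r_admissible[OF sdp_feasible_level_zero_admissible[OF assms(1,2,5)]]
    by blast
  then show ?thesis
    using weakly_eps_efficient_qcqp_if_lp[OF assms(1,2,4) _ _ assms(6)] by blast
qed

end
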